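(* Let $D$ be a digraph rooted at $r$, let $x \in V(D) \setminus \{r\}$, and let $\mathcal{S}$ be a non-empty collection of subsets of $V(D) \setminus \{r\}$ such that each $S \in \mathcal{S}$ separates $x$ from $r$. Let $\bigvee \mathcal{S}$ be the set of those elements $s \in \bigcup \mathcal{S}$ that are separated from $r$ by every $S \in \mathcal{S}$. Then $\bigvee \mathcal{S}$ separates $x$ from $r$.
   Context: A vertex set $S$ separates a vertex $y$ from $r$ if every directed path from $r$ to $y$ contains a vertex of $S$. *)

theory Defs
  imports Main
begin

text \<open>A digraph is given by a vertex set V and an arc relation E \<subseteq> V \<times> V
  (arbitrary, possibly infinite).\<close>

definition dpath :: "'a set \<Rightarrow> ('a \<times> 'a) set \<Rightarrow> 'a list \<Rightarrow> bool" where
  "dpath V E p \<longleftrightarrow> p \<noteq> [] \<and> distinct p \<and> set p \<subseteq> V \<and>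
     successively (\<lambda>u v. (u, v) \<in> E) p"

definition dpath_from_to :: "'a set \<Rightarrow> ('a \<times> 'a) set \<Rightarrow> 'a \<Rightarrow> 'a \<Rightarrow> 'a list \<Rightarrow> bool" where
  "dpath_from_to V E u v p \<longleftrightarrow> dpath V E p \<and> hd p = u \<and> last p = v"

definition rooted_digraph :: "'a set \<Rightarrow> ('a \<times> 'a) set \<Rightarrow> 'a \<Rightarrow> bool" where
  "rooted_digraph V E r \<longleftrightarrow> E \<subseteq> V \<times> V \<and> r \<in> V \<and>
     (\<forall>v\<in>V. \<exists>p. dpath_from_to V E r v p)"

definition separates :: "'a set \<Rightarrow> ('a \<times> 'a) set \<Rightarrow> 'a \<Rightarrow> 'a set \<Rightarrow> 'a \<Rightarrow> bool" where
  "separates V E r S y \<longleftrightarrow> (\<forall>p. dpath_from_to V E r y p \<longrightarrow> set p \<inter> S \<noteq> {})"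

definition sep_join :: "'a set \<Rightarrow> ('a \<times> 'a) set \<Rightarrow> 'a \<Rightarrow> 'a set set \<Rightarrow> 'a set" where
  "sep_join V E r \<S> = {s \<in> \<Union>\<S>. \<forall>S\<in>\<S>. separates V E r S s}"

end

theory Submission
  imports Defs
begin

text \<open>Let p be a path from r to x and let s be the last vertex of p lying in some member
  of \<S>. For every S \<in> \<S>, the part of p after s avoids S; so if a path from r to s
  avoided S, following it and then the rest of p would give a walk, hence a path, from r
  to x avoiding S. Thus every S \<in> \<S> separates s from r, and s is a vertex of the join
  on p.\<close>

lemma successively_shortcut:
  assumes "xs \<noteq> []" and "successively R xs"
  shows "\<exists>ys. ys \<noteq> [] \<and> distinct ys \<and> set ys \<subseteq> set xs \<and> successively R ys \<and>
           hd ys = hd xs \<and> last ys = last xs"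
  using assms
proof (induction xs)
  case Nil
  then show ?case by simp
next
  case (Cons a xs)
  show ?case
  proof (cases "xs = []")
    case True
    then show ?thesis by (intro exI[of _ "[a]"]) auto
  next
    case False
    with Cons.prems have "successively R xs" and "R a (hd xs)"
      by (cases xs; simp)+
    with Cons.IH False obtain ys where ys: "ys \<noteq> []" "distinct ys" "set ys \<subseteq> set xs"
      "successively R ys" "hd ys = hd xs" "last ys = last xs"
      by blast
    show ?thesis
    proof (cases "a \<in> set ys")
      case False
      with ys \<open>R a (hd xs)\<close> \<open>xs \<noteq> []\<close> show ?thesis
        by (intro exI[of _ "a # ys"]) (cases ys; auto)
    next
      case True
      \<comment> \<open>cut the cycle from a back to a\<close>
      then obtain ys1 ys2 where "ys = ys1 @ a # ys2" by (meson split_list)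
      with ys \<open>xs \<noteq> []\<close> show ?thesis
        by (intro exI[of _ "a # ys2"]) (auto simp: successively_append_iff)
    qed
  qed
qed

definition dwalk_from_to :: "'a set \<Rightarrow> ('a \<times> 'a) set \<Rightarrow> 'a \<Rightarrow> 'a \<Rightarrow> 'a list \<Rightarrow> bool" where
  "dwalk_from_to V E u v w \<longleftrightarrow> w \<noteq> [] \<and> set w \<subseteq> V \<and>
     successively (\<lambda>a b. (a, b) \<in> E) w \<and> hd w = u \<and> last w = v"

lemma dpath_from_to_imp_dwalk_from_to:
  "dpath_from_to V E u v p \<Longrightarrow> dwalk_from_to V E u v p"
  unfolding dpath_from_to_def dpath_def dwalk_from_to_def by blast

lemma dwalk_from_to_contains_dpath:
  assumes "dwalk_from_to V E u v w"
  obtains p where "dpath_from_to V E u v p" and "set p \<subseteq> set w"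
  using assms successively_shortcut[of w "\<lambda>a b. (a, b) \<in> E"]
  unfolding dwalk_from_to_def dpath_from_to_def dpath_def by fast

lemma dwalk_from_to_drop:
  assumes "dwalk_from_to V E u v w" and "i < length w"
  shows "dwalk_from_to V E (w ! i) v (drop i w)"
proof -
  have "successively R (drop i w)" if "successively R w" for R
    using that by (metis append_take_drop_id successively_append_iff)
  with assms show ?thesis
    unfolding dwalk_from_to_def by (auto simp: hd_drop_conv_nth dest: in_set_dropD)
qed

lemma dwalk_from_to_join:
  assumes "dwalk_from_to V E u v q" and "dwalk_from_to V E v y t"
  shows "dwalk_from_to V E u y (q @ tl t)"
proof (cases "tl t = []")
  case True
  with assms show ?thesis
    unfolding dwalk_from_to_def by (cases t) auto
next
  case False
  then obtain b t' where "t = v # b # t'"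
    using assms(2) unfolding dwalk_from_to_def by (cases t; cases "tl t") auto
  with assms show ?thesis
    unfolding dwalk_from_to_def by (auto simp: successively_append_iff)
qed

lemma separates_imp_dwalk_meets:
  assumes "separates V E r S y" and "dwalk_from_to V E r y w"
  shows "set w \<inter> S \<noteq> {}"
proof -
  obtain p where "dpath_from_to V E r y p" and "set p \<subseteq> set w"
    using dwalk_from_to_contains_dpath[OF assms(2)] .
  with assms(1) show ?thesis
    unfolding separates_def by blast
qed

lemma last_index_in:
  assumes "set xs \<inter> A \<noteq> {}"
  obtains i where "i < length xs" and "xs ! i \<in> A"
    and "\<And>j. j < length xs \<Longrightarrow> xs ! j \<in> A \<Longrightarrow> j \<le> i"
proof -
  let ?I = "{i. i < length xs \<and> xs ! i \<in> A}"
  have "finite ?I" by simp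
  moreover have "?I \<noteq> {}"
    using assms by (auto simp: in_set_conv_nth)
  ultimately show ?thesis
    using that Max_in Max_ge by (metis (no_types, lifting) mem_Collect_eq)
qed

lemma separates_at_last_hit:
  assumes sep: "separates V E r S x" and p: "dpath_from_to V E r x p"
    and "m < length p"
    and after_m: "\<And>j. j < length p \<Longrightarrow> p ! j \<in> S \<Longrightarrow> j \<le> m"
  shows "separates V E r S (p ! m)"
  unfolding separates_def
proof (intro allI impI notI)
  fix q assume q: "dpath_from_to V E r (p ! m) q" and q_avoids: "set q \<inter> S = {}"
  have "dwalk_from_to V E (p ! m) x (drop m p)"
    using dwalk_from_to_drop[OF dpath_from_to_imp_dwalk_from_to[OF p] \<open>m < length p\<close>] .
  then have "dwalk_from_to V E r x (q @ tl (drop m p))"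
    by (rule dwalk_from_to_join[OF dpath_from_to_imp_dwalk_from_to[OF q]])
  then have "set (q @ tl (drop m p)) \<inter> S \<noteq> {}"
    by (rule separates_imp_dwalk_meets[OF sep])
  moreover have "set (tl (drop m p)) \<inter> S = {}"
  proof -
    have "y \<notin> S" if "y \<in> set (drop (Suc m) p)" for y
    proof -
      from that obtain k where "k < length p - Suc m" and y: "y = p ! (Suc m + k)"
        by (auto simp: in_set_conv_nth)
      then have "Suc m + k < length p" by linarith
      with after_m[of "Suc m + k"] y show ?thesis by auto
    qed
    moreover have "tl (drop m p) = drop (Suc m) p"
      by (simp add: drop_Suc tl_drop)
    ultimately show ?thesis by auto
  qed
  ultimately show False
    using q_avoids by auto
qed

theorem lemma5p1:
  fixes V :: "'a set" and E :: "('a \<times> 'a) set" and r x :: 'a and \<S> :: "'a set set"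
  assumes "rooted_digraph V E r"
    and "x \<in> V - {r}"
    and "\<S> \<noteq> {}"
    and "\<forall>S\<in>\<S>. S \<subseteq> V - {r}"
    and "\<forall>S\<in>\<S>. separates V E r S x"
  shows "separates V E r (sep_join V E r \<S>) x"
  unfolding separates_def
proof (intro allI impI)
  fix p assume p: "dpath_from_to V E r x p"
  from assms(3,5) p have "set p \<inter> \<Union>\<S> \<noteq> {}"
    unfolding separates_def by blast
  then obtain m where m: "m < length p" "p ! m \<in> \<Union>\<S>"
    and last_hit: "\<And>j. j < length p \<Longrightarrow> p ! j \<in> \<Union>\<S> \<Longrightarrow> j \<le> m"
    by (rule last_index_in) blast
  have "separates V E r S (p ! m)" if "S \<in> \<S>" for S
    using separates_at_last_hit[of V E r S x p m] assms(5) that p m last_hit by blast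
  with m have "p ! m \<in> sep_join V E r \<S>"
    unfolding sep_join_def by blast
  with m show "set p \<inter> sep_join V E r \<S> \<noteq> {}"
    by (meson disjoint_iff nth_mem)
qed

end
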